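(* Let $m_1\in\mathbb N$, $\theta=(\theta_1,\dots,\theta_{m_1})$ with $\theta_i>0$, and let $u=(u_1,\dots,u_{m_1})$ be a function of $t$ with values in $[0,\infty)^{m_1}$, differentiable in $t$. For integers $p\ge0$ let $\mathcal H_p[u]=\sum_{\beta\in\mathbb Z_+^{m_1},|\beta|=p}\binom{p}{\beta}\theta^{\beta^2}u^\beta$. Then $\partial_t\mathcal H_0[u]=0$, $\partial_t\mathcal H_1[u]=\sum_{j=1}^{m_1}\theta_j\partial_tu_j$, and for every integer $p\ge2$, $$\partial_t\mathcal H_p[u]=\sum_{|\beta|=p-1}\binom{p}{\beta}\theta^{\beta^2}u^\beta\sum_{j=1}^{m_1}\theta_j^{2\beta_j+1}\partial_tu_j.$$
   Context: $\mathbb Z_+^{m}$ is the set of $m$-tuples of nonnegative integers; for $\beta\in\mathbb Z_+^m$, $|\beta|=\sum_i\beta_i$, $\beta^2=(\beta_1^2,\dots,\beta_m^2)$, $z^\alpha=\prod_iz_i^{\alpha_i}$ with $0^0=1$, and $\binom{p}{\beta}=\frac{p!}{\beta_1!\cdots\beta_m!}$ (also used when $|\beta|<p$). *)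

theory Defs
  imports Complex_Main
begin

text \<open>Multi-indices in Z_+^m are represented as functions nat => nat vanishing outside {..<m}
 (coordinates are indexed 0..m-1).\<close>

definition multi_indices :: "nat \<Rightarrow> nat \<Rightarrow> (nat \<Rightarrow> nat) set" where
  "multi_indices m p = {\<beta>. (\<forall>i. m \<le> i \<longrightarrow> \<beta> i = 0) \<and> (\<Sum>i<m. \<beta> i) = p}"

text \<open>Multinomial coefficient p!/(beta_1! ... beta_m!), also used when |beta| < p.\<close>
definition multinom :: "nat \<Rightarrow> nat \<Rightarrow> (nat \<Rightarrow> nat) \<Rightarrow> real" where
  "multinom m p \<beta> = fact p / (\<Prod>i<m. fact (\<beta> i))"

definition wmono :: "nat \<Rightarrow> (nat \<Rightarrow> real) \<Rightarrow> (nat \<Rightarrow> nat) \<Rightarrow> (nat \<Rightarrow> real) \<Rightarrow> real" where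
  "wmono m \<theta> \<beta> u = (\<Prod>i<m. \<theta> i ^ ((\<beta> i)\<^sup>2) * u i ^ \<beta> i)"

definition Hp :: "nat \<Rightarrow> (nat \<Rightarrow> real) \<Rightarrow> nat \<Rightarrow> (nat \<Rightarrow> real) \<Rightarrow> real" where
  "Hp m \<theta> p u = (\<Sum>\<beta>\<in>multi_indices m p. multinom m p \<beta> * wmono m \<theta> \<beta> u)"

end

theory Submission
  imports Defs
begin

text \<open>Differentiating \<theta>^(\<beta>^2) u^\<beta> in u_j lowers \<beta>_j by one and produces the factor
  \<beta>_j \<theta>_j^(2\<beta>_j - 1), because \<beta>_j^2 - (\<beta>_j - 1)^2 = 2\<beta>_j - 1. Writing \<beta> = \<gamma> + e_j,
  which maps the multi-indices of size p - 1 bijectively onto those of size p with \<beta>_j > 0,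
  the factor \<gamma>_j + 1 is absorbed by the multinomial coefficient:
  (\<gamma>_j + 1) binom(p, \<gamma> + e_j) = binom(p, \<gamma>). The identity is purely algebraic.\<close>

lemma finite_multi_indices: "finite (multi_indices m p)"
proof (rule finite_subset)
  show "multi_indices m p \<subseteq> {\<beta>. \<forall>i. (i \<in> {..<m} \<longrightarrow> \<beta> i \<in> {..p}) \<and> (i \<notin> {..<m} \<longrightarrow> \<beta> i = 0)}"
  proof (intro subsetI CollectI allI conjI impI)
    fix \<beta> i assume \<beta>: "\<beta> \<in> multi_indices m p"
    show "\<beta> i \<in> {..p}" if "i \<in> {..<m}"
      using member_le_sum[OF that, of \<beta>] \<beta> by (simp add: multi_indices_def)
    show "\<beta> i = 0" if "i \<notin> {..<m}"
      using \<beta> that by (simp add: multi_indices_def)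
  qed
  show "finite {\<beta>::nat \<Rightarrow> nat. \<forall>i. (i \<in> {..<m} \<longrightarrow> \<beta> i \<in> {..p}) \<and> (i \<notin> {..<m} \<longrightarrow> \<beta> i = 0)}"
    by (rule finite_set_of_finite_funs) auto
qed

lemma multi_indices_0: "multi_indices m 0 = {\<lambda>_. 0}"
  by (auto simp: multi_indices_def fun_eq_iff) (metis lessThan_iff not_le)

lemma Hp_0: "Hp m \<theta> 0 v = 1"
  by (simp add: Hp_def multi_indices_0 multinom_def wmono_def)

lemma bij_betw_multi_indices_Suc:
  assumes "j < m"
  shows "bij_betw (\<lambda>\<gamma>. \<gamma>(j := Suc (\<gamma> j)))
           (multi_indices m p) {\<beta> \<in> multi_indices m (Suc p). 0 < \<beta> j}"
proof (rule bij_betw_byWitness[where f' = "\<lambda>\<beta>. \<beta>(j := \<beta> j - 1)"])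
  have sum_upd: "(\<Sum>i<m. (\<gamma>(j := Suc (\<gamma> j))) i) = Suc (\<Sum>i<m. \<gamma> i)" for \<gamma> :: "nat \<Rightarrow> nat"
    using assms by (simp add: sum.remove[of "{..<m}" j])
  show "(\<lambda>\<gamma>. \<gamma>(j := Suc (\<gamma> j))) ` multi_indices m p \<subseteq> {\<beta> \<in> multi_indices m (Suc p). 0 < \<beta> j}"
  proof (intro image_subsetI CollectI conjI)
    fix \<gamma> assume "\<gamma> \<in> multi_indices m p"
    with assms sum_upd[of \<gamma>] show "\<gamma>(j := Suc (\<gamma> j)) \<in> multi_indices m (Suc p)"
      by (auto simp: multi_indices_def)
  qed simp_all
  show "(\<lambda>\<beta>. \<beta>(j := \<beta> j - 1)) ` {\<beta> \<in> multi_indices m (Suc p). 0 < \<beta> j} \<subseteq> multi_indices m p"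
  proof clarify
    fix \<beta> assume \<beta>: "\<beta> \<in> multi_indices m (Suc p)" "0 < \<beta> j"
    have "(\<Sum>i<m. \<beta> i) = Suc (\<Sum>i<m. (\<beta>(j := \<beta> j - 1)) i)"
      using sum_upd[of "\<beta>(j := \<beta> j - 1)"] \<beta>(2) by simp
    with \<beta> assms show "\<beta>(j := \<beta> j - 1) \<in> multi_indices m p"
      by (auto simp: multi_indices_def)
  qed
qed auto

lemma multinom_fun_upd_Suc:
  assumes "j < m"
  shows "real (Suc (\<gamma> j)) * multinom m p (\<gamma>(j := Suc (\<gamma> j))) = multinom m p \<gamma>"
proof -
  let ?rest = "\<Prod>i\<in>{..<m} - {j}. fact (\<gamma> i) :: real"
  have j: "j \<in> {..<m}" using assms by simp
  have "(\<Prod>i<m. fact ((\<gamma>(j := Suc (\<gamma> j))) i) :: real) = fact (Suc (\<gamma> j)) * ?rest"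
    by (simp add: prod.remove[OF finite_lessThan j])
  moreover have "(\<Prod>i<m. fact (\<gamma> i) :: real) = fact (\<gamma> j) * ?rest"
    by (simp add: prod.remove[OF finite_lessThan j])
  ultimately have "(\<Prod>i<m. fact ((\<gamma>(j := Suc (\<gamma> j))) i) :: real)
        = real (Suc (\<gamma> j)) * (\<Prod>i<m. fact (\<gamma> i))"
    by simp
  then show ?thesis
    by (simp add: multinom_def)
qed

lemma sum_multi_indices_Suc_weighted:
  assumes "j < m"
  shows "(\<Sum>\<beta>\<in>multi_indices m (Suc p). real (\<beta> j) * multinom m q \<beta> * F \<beta>)
       = (\<Sum>\<gamma>\<in>multi_indices m p. multinom m q \<gamma> * F (\<gamma>(j := Suc (\<gamma> j))))"
proof -
  have "(\<Sum>\<beta>\<in>multi_indices m (Suc p). real (\<beta> j) * multinom m q \<beta> * F \<beta>)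
      = (\<Sum>\<beta>\<in>{\<beta> \<in> multi_indices m (Suc p). 0 < \<beta> j}. real (\<beta> j) * multinom m q \<beta> * F \<beta>)"
    by (rule sum.mono_neutral_right) (auto simp: finite_multi_indices)
  also have "\<dots> = (\<Sum>\<gamma>\<in>multi_indices m p.
      real (Suc (\<gamma> j)) * multinom m q (\<gamma>(j := Suc (\<gamma> j))) * F (\<gamma>(j := Suc (\<gamma> j))))"
    unfolding sum.reindex_bij_betw[OF bij_betw_multi_indices_Suc[OF assms], symmetric] by simp
  also have "\<dots> = (\<Sum>\<gamma>\<in>multi_indices m p. multinom m q \<gamma> * F (\<gamma>(j := Suc (\<gamma> j))))"
    using multinom_fun_upd_Suc[OF assms] by simp
  finally show ?thesis .
qed

lemma wmono_fun_upd:
  assumes "j < m"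
  shows "wmono m \<theta> (\<beta>(j := k)) v
       = \<theta> j ^ k\<^sup>2 * v j ^ k * (\<Prod>i\<in>{..<m} - {j}. \<theta> i ^ (\<beta> i)\<^sup>2 * v i ^ \<beta> i)"
proof -
  have j: "j \<in> {..<m}" using assms by simp
  show ?thesis
    by (simp add: wmono_def prod.remove[OF finite_lessThan j])
qed

lemma has_real_derivative_wmono:
  assumes "\<forall>j<m. ((\<lambda>s. u s j) has_real_derivative u' j) (at t)"
  shows "((\<lambda>s. wmono m \<theta> \<beta> (u s)) has_real_derivative
           (\<Sum>j<m. real (\<beta> j) * \<theta> j ^ (2 * \<beta> j - 1) * u' j * wmono m \<theta> (\<beta>(j := \<beta> j - 1)) (u t))) (at t)"
proof -
  let ?rest = "\<lambda>j. \<Prod>i\<in>{..<m} - {j}. \<theta> i ^ (\<beta> i)\<^sup>2 * u t i ^ \<beta> i"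
  have "((\<lambda>s. wmono m \<theta> \<beta> (u s)) has_real_derivative
      (\<Sum>j<m. \<theta> j ^ (\<beta> j)\<^sup>2 * (real (\<beta> j) * (u' j * u t j ^ (\<beta> j - Suc 0))) * ?rest j)) (at t)"
    unfolding wmono_def
    by (rule has_field_derivative_prod, rule DERIV_cmult, rule DERIV_power) (use assms in auto)
  moreover have "\<theta> j ^ (\<beta> j)\<^sup>2 * (real (\<beta> j) * (u' j * u t j ^ (\<beta> j - Suc 0))) * ?rest j
      = real (\<beta> j) * \<theta> j ^ (2 * \<beta> j - 1) * u' j * wmono m \<theta> (\<beta>(j := \<beta> j - 1)) (u t)"
    if "j < m" for j
  proof (cases "\<beta> j")
    case (Suc g)
    have "(Suc g)\<^sup>2 = (2 * Suc g - 1) + g\<^sup>2" by (simp add: power2_eq_square)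
    then have \<theta>_pow: "\<theta> j ^ (Suc g)\<^sup>2 = \<theta> j ^ (2 * Suc g - 1) * \<theta> j ^ g\<^sup>2"
      by (simp only: power_add)
    show ?thesis
      unfolding Suc wmono_fun_upd[OF that] \<theta>_pow by (simp add: mult_ac)
  qed simp
  ultimately show ?thesis by simp
qed

lemma has_real_derivative_Hp_Suc:
  assumes "\<forall>j<m. ((\<lambda>s. u s j) has_real_derivative u' j) (at t)"
  shows "((\<lambda>s. Hp m \<theta> (Suc p) (u s)) has_real_derivative
           (\<Sum>\<beta>\<in>multi_indices m p. multinom m (Suc p) \<beta> * wmono m \<theta> \<beta> (u t)
              * (\<Sum>j<m. \<theta> j ^ (2 * \<beta> j + 1) * u' j))) (at t)"
proof -
  let ?F = "\<lambda>j \<beta>. \<theta> j ^ (2 * \<beta> j - 1) * u' j * wmono m \<theta> (\<beta>(j := \<beta> j - 1)) (u t)"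
  have "((\<lambda>s. Hp m \<theta> (Suc p) (u s)) has_real_derivative
      (\<Sum>\<beta>\<in>multi_indices m (Suc p). multinom m (Suc p) \<beta>
         * (\<Sum>j<m. real (\<beta> j) * \<theta> j ^ (2 * \<beta> j - 1) * u' j * wmono m \<theta> (\<beta>(j := \<beta> j - 1)) (u t)))) (at t)"
    unfolding Hp_def by (rule DERIV_sum, rule DERIV_cmult, rule has_real_derivative_wmono[OF assms])
  moreover have "(\<Sum>\<beta>\<in>multi_indices m (Suc p). multinom m (Suc p) \<beta>
         * (\<Sum>j<m. real (\<beta> j) * \<theta> j ^ (2 * \<beta> j - 1) * u' j * wmono m \<theta> (\<beta>(j := \<beta> j - 1)) (u t)))
      = (\<Sum>j<m. \<Sum>\<beta>\<in>multi_indices m (Suc p). real (\<beta> j) * multinom m (Suc p) \<beta> * ?F j \<beta>)"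
    by (simp add: sum_distrib_left sum.swap[of _ "multi_indices m (Suc p)"] mult_ac)
  moreover have "\<dots> = (\<Sum>j<m. \<Sum>\<gamma>\<in>multi_indices m p. multinom m (Suc p) \<gamma> * ?F j (\<gamma>(j := Suc (\<gamma> j))))"
    by (rule sum.cong[OF refl], rule sum_multi_indices_Suc_weighted) simp
  moreover have "\<dots> = (\<Sum>\<beta>\<in>multi_indices m p. multinom m (Suc p) \<beta> * wmono m \<theta> \<beta> (u t)
              * (\<Sum>j<m. \<theta> j ^ (2 * \<beta> j + 1) * u' j))"
    by (simp add: sum_distrib_left sum.swap[of _ "{..<m}"] mult_ac)
  ultimately show ?thesis by simp
qed

theorem lemmaA1:
  fixes m :: nat and \<theta> :: "nat \<Rightarrow> real" and u :: "real \<Rightarrow> nat \<Rightarrow> real"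
    and u' :: "nat \<Rightarrow> real" and t :: real
  assumes "\<forall>i<m. \<theta> i > 0"
    and "\<forall>s. \<forall>i<m. u s i \<ge> 0"
    and "\<forall>j<m. ((\<lambda>s. u s j) has_real_derivative u' j) (at t)"
  shows "((\<lambda>s. Hp m \<theta> 0 (u s)) has_real_derivative 0) (at t)
    \<and> ((\<lambda>s. Hp m \<theta> 1 (u s)) has_real_derivative (\<Sum>j<m. \<theta> j * u' j)) (at t)
    \<and> (\<forall>p::nat. p \<ge> 2 \<longrightarrow>
      ((\<lambda>s. Hp m \<theta> p (u s)) has_real_derivative
        (\<Sum>\<beta>\<in>multi_indices m (p - 1). multinom m p \<beta> * wmono m \<theta> \<beta> (u t)
            * (\<Sum>j<m. \<theta> j ^ (2 * \<beta> j + 1) * u' j))) (at t))"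
proof (intro conjI allI impI)
  note deriv_Suc = has_real_derivative_Hp_Suc[OF assms(3)]
  show "((\<lambda>s. Hp m \<theta> 0 (u s)) has_real_derivative 0) (at t)"
    by (simp add: Hp_0)
  show "((\<lambda>s. Hp m \<theta> 1 (u s)) has_real_derivative (\<Sum>j<m. \<theta> j * u' j)) (at t)"
    using deriv_Suc[of \<theta> 0] by (simp add: multi_indices_0 multinom_def wmono_def)
  fix p :: nat
  assume "p \<ge> 2"
  then show "((\<lambda>s. Hp m \<theta> p (u s)) has_real_derivative
        (\<Sum>\<beta>\<in>multi_indices m (p - 1). multinom m p \<beta> * wmono m \<theta> \<beta> (u t)
            * (\<Sum>j<m. \<theta> j ^ (2 * \<beta> j + 1) * u' j))) (at t)"
    using deriv_Suc[of \<theta> "p - 1"] by simp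
qed

end
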